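(* Let $G$ be a finitely generated group with uniformly $\alpha$-almost flat coset spaces, and let $H$ be a finite-index subgroup of $G$. Then $H$ has uniformly $\alpha$-almost flat coset spaces.
   Context: For a finitely generated group $L$ with finite symmetric generating set $X$ containing the identity, $X^n=\{x_1\cdots x_n:x_i\in X\}$ and for a finite-index subgroup $M\le L$, $\operatorname{diam}_X(L/M)=\min\{n\in\mathbb{N}:X^nM=L\}$. $L$ has uniformly $\alpha$-almost flat coset spaces ($\alpha\in(0,1]$) if there exists $\varepsilon>0$ with $\operatorname{diam}_X(L/M)\ge\varepsilon[L:M]^\alpha$ for every finite-index subgroup $M\le L$; this does not depend on the choice of $X$. (A finite-index subgroup of a finitely generated group is finitely generated.) *)

theory Defs
  imports "HOL-Algebra.Algebra" Complex_Main
begin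

definition fin_sym_gen_set :: "('a, 'b) monoid_scheme \<Rightarrow> 'a set \<Rightarrow> bool" where
  "fin_sym_gen_set Gp S \<longleftrightarrow> S \<subseteq> carrier Gp \<and> finite S \<and> monoid.one Gp \<in> S \<and>
     (\<forall>x\<in>S. m_inv Gp x \<in> S) \<and> generate Gp S = carrier Gp"

fun set_pow :: "('a, 'b) monoid_scheme \<Rightarrow> 'a set \<Rightarrow> nat \<Rightarrow> 'a set" where
  "set_pow Gp S 0 = {monoid.one Gp}"
| "set_pow Gp S (Suc n) = set_mult Gp S (set_pow Gp S n)"

definition coset_diam :: "('a, 'b) monoid_scheme \<Rightarrow> 'a set \<Rightarrow> 'a set \<Rightarrow> nat" where
  "coset_diam Gp S M = (LEAST n. n \<ge> 1 \<and> set_mult Gp (set_pow Gp S n) M = carrier Gp)"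

text \<open>Index [Gp:M] as the number of right cosets (meaningful when finite).\<close>
definition group_index :: "('a, 'b) monoid_scheme \<Rightarrow> 'a set \<Rightarrow> nat" where
  "group_index Gp M = card (RCOSETS Gp M)"

definition finite_index_subgroup :: "'a set \<Rightarrow> ('a, 'b) monoid_scheme \<Rightarrow> bool" where
  "finite_index_subgroup M Gp \<longleftrightarrow> subgroup M Gp \<and> finite (RCOSETS Gp M)"

definition finitely_generated_group :: "('a, 'b) monoid_scheme \<Rightarrow> bool" where
  "finitely_generated_group Gp \<longleftrightarrow> group Gp \<and> (\<exists>S. fin_sym_gen_set Gp S)"

text \<open>Uniformly alpha-almost flat coset spaces: Gp is finitely generated and for
  (any, equivalently some) finite symmetric generating set S containing 1 there is
  eps > 0 with diam_X(Gp/M) >= eps [Gp:M]^alpha for all finite-index subgroups M.\<close>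
definition unif_almost_flat :: "('a, 'b) monoid_scheme \<Rightarrow> real \<Rightarrow> bool" where
  "unif_almost_flat Gp \<alpha> \<longleftrightarrow> finitely_generated_group Gp \<and>
     (\<forall>S. fin_sym_gen_set Gp S \<longrightarrow>
        (\<exists>\<epsilon>>0. \<forall>M. finite_index_subgroup M Gp \<longrightarrow>
            real (coset_diam Gp S M) \<ge> \<epsilon> * real (group_index Gp M) powr \<alpha>))"

end

theory Submission
  imports Defs
begin

(* By Schreier's lemma a finite-index subgroup H of a finitely generated group G is finitely
   generated: if T is a finite transversal with H T = G and 1 \<in> T, and S generates G, then
   H \<inter> T S T^-1 generates H.  Conversely, a generating set Q of H together with a finite set R
   of coset representatives (R H = G) and their inverses generates G.  A finite-index subgroup
   M of H has finite index in G with [H:M] \<le> [G:M], and R Q^d M = R H = G gives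
   diam(G/M) \<le> diam(H/M) + 1 \<le> 2 diam(H/M).  So the constant \<epsilon> for G yields \<epsilon>/2 for H. *)

lemma set_pow_consistent [simp]: "set_pow (G\<lparr>carrier := H\<rparr>) S n = set_pow G S n"
  by (induction n) simp_all

lemma RCOSETS_consistent: "RCOSETS (G\<lparr>carrier := H\<rparr>) M = (\<Union>h\<in>H. {M #>\<^bsub>G\<^esub> h})"
  by (simp add: RCOSETS_def)

lemma set_pow_mono: "S \<subseteq> S' \<Longrightarrow> set_pow G S n \<subseteq> set_pow G S' n"
  by (induction n) (simp_all add: mono_set_mult)

lemma coset_diam_le:
  "1 \<le> n \<Longrightarrow> set_pow G S n <#>\<^bsub>G\<^esub> M = carrier G \<Longrightarrow> coset_diam G S M \<le> n"
  unfolding coset_diam_def by (rule Least_le) simp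

lemma coset_diam_covers:
  assumes "1 \<le> n" "set_pow G S n <#>\<^bsub>G\<^esub> M = carrier G"
  shows "1 \<le> coset_diam G S M" "set_pow G S (coset_diam G S M) <#>\<^bsub>G\<^esub> M = carrier G"
  using LeastI[of "\<lambda>n. 1 \<le> n \<and> set_pow G S n <#>\<^bsub>G\<^esub> M = carrier G" n] assms
  by (simp_all add: coset_diam_def)

lemma finite_subset_UN_mono:
  fixes F :: "nat \<Rightarrow> 'a set"
  assumes "finite A" "A \<subseteq> (\<Union>n. F n)" "mono F"
  shows "\<exists>n. A \<subseteq> F n"
  using assms(1,2)
proof (induction A rule: finite_induct)
  case (insert a A)
  then obtain m n where "a \<in> F m" "A \<subseteq> F n" by blast
  then have "insert a A \<subseteq> F (max m n)"
    using monoD[OF \<open>mono F\<close>, of m "max m n"] monoD[OF \<open>mono F\<close>, of n "max m n"] by auto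
  then show ?case ..
qed simp

definition schreier_generators :: "('a, 'b) monoid_scheme \<Rightarrow> 'a set \<Rightarrow> 'a set \<Rightarrow> 'a set \<Rightarrow> 'a set"
  where "schreier_generators G H T S = H \<inter> (T <#>\<^bsub>G\<^esub> S <#>\<^bsub>G\<^esub> m_inv G ` T)"

context group
begin

lemma set_pow_closed: "S \<subseteq> carrier G \<Longrightarrow> set_pow G S n \<subseteq> carrier G"
  by (induction n) (simp_all add: setmult_subset_G)

lemma set_pow_add:
  assumes "S \<subseteq> carrier G"
  shows "set_pow G S m <#> set_pow G S n = set_pow G S (m + n)"
proof (induction m)
  case 0
  show ?case using lcos_mult_one[OF set_pow_closed[OF assms]] by (simp add: l_coset_eq_set_mult)
next
  case (Suc m)
  then show ?case using set_mult_assoc[OF assms set_pow_closed set_pow_closed] assms by simp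
qed

lemma mono_set_pow:
  assumes "S \<subseteq> carrier G" "\<one> \<in> S"
  shows "mono (set_pow G S)"
proof (rule monoI, rule lift_Suc_mono_le)
  fix n
  have "set_pow G S n = {\<one>} <#> set_pow G S n"
    using lcos_mult_one[OF set_pow_closed[OF assms(1)]] by (simp add: l_coset_eq_set_mult)
  also have "\<dots> \<subseteq> set_pow G S (Suc n)" using assms(2) by (simp add: mono_set_mult)
  finally show "set_pow G S n \<subseteq> set_pow G S (Suc n)" .
qed

lemma generate_subset_UN_set_pow:
  assumes "S \<subseteq> carrier G" "\<one> \<in> S" "\<And>x. x \<in> S \<Longrightarrow> inv x \<in> S"
  shows "generate G S \<subseteq> (\<Union>n. set_pow G S n)"
proof
  have "set_pow G S 1 = S"
    using coset_mult_one[OF assms(1)] by (simp add: r_coset_eq_set_mult)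
  then have S_subset: "S \<subseteq> (\<Union>n. set_pow G S n)" by (metis UNIV_I UN_upper)
  fix x assume "x \<in> generate G S"
  then show "x \<in> (\<Union>n. set_pow G S n)"
  proof induction
    case (eng a b)
    then obtain m n where "a \<in> set_pow G S m" "b \<in> set_pow G S n" by blast
    then have "a \<otimes> b \<in> set_pow G S (m + n)"
      unfolding set_pow_add[OF assms(1), symmetric] by (auto simp: set_mult_def)
    then show ?case by blast
  qed (use S_subset assms in blast)+
qed

lemma finite_rcosets_imp_transversal:
  assumes "subgroup K G" "finite (rcosets K)"
  obtains R where "finite R" "R \<subseteq> carrier G" "K <#> R = carrier G"
proof -
  have "\<forall>C\<in>rcosets K. \<exists>g. g \<in> carrier G \<and> C = K #> g" by (auto simp: RCOSETS_def)
  from bchoice[OF this] obtain f where f: "\<And>C. C \<in> rcosets K \<Longrightarrow> f C \<in> carrier G \<and> C = K #> f C"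
    by blast
  have K: "K \<subseteq> carrier G" using assms(1) subgroup.subset by blast
  have "carrier G \<subseteq> K <#> f ` (rcosets K)"
  proof
    fix g assume g: "g \<in> carrier G"
    then have C: "K #> g \<in> rcosets K" using K by (rule rcosetsI[rotated])
    have "K #> f (K #> g) = K #> g" using f[OF C] by (rule sym[OF conjunct2])
    then have "g \<in> K #> f (K #> g)" using rcos_self[OF g assms(1)] by simp
    then show "g \<in> K <#> f ` (rcosets K)" using C by (auto simp: r_coset_def set_mult_def)
  qed
  moreover have "f ` (rcosets K) \<subseteq> carrier G" using f by blast
  moreover have "K <#> f ` (rcosets K) \<subseteq> carrier G" using K calculation(2) by (rule setmult_subset_G)
  ultimately show ?thesis using assms(2) by (intro that) auto
qed

lemma transversal_imp_finite_rcosets: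
  assumes "subgroup K G" "finite R" "R \<subseteq> carrier G" "K <#> R = carrier G"
  shows "finite (rcosets K)"
proof (rule finite_subset)
  show "rcosets K \<subseteq> (\<lambda>r. K #> r) ` R"
  proof
    fix C assume "C \<in> rcosets K"
    then obtain g where g: "g \<in> carrier G" "C = K #> g" by (auto simp: RCOSETS_def)
    then have "g \<in> K <#> R" using assms(4) by simp
    then obtain k r where kr: "k \<in> K" "r \<in> R" "g = k \<otimes> r"
      unfolding set_mult_def by blast
    then have "g \<in> K #> r" by (auto simp: r_coset_def)
    then have "C = K #> r" using repr_independence assms(1,3) kr(2) g by blast
    then show "C \<in> (\<lambda>r. K #> r) ` R" using kr(2) by blast
  qed
qed (use assms(2) in simp)

lemma finite_rcosets_imp_left_transversal:
  assumes "subgroup K G" "finite (rcosets K)"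
  obtains R where "finite R" "R \<subseteq> carrier G" "R <#> K = carrier G"
proof -
  obtain R where R: "finite R" "R \<subseteq> carrier G" "K <#> R = carrier G"
    using finite_rcosets_imp_transversal[OF assms] .
  have K: "K \<subseteq> carrier G" using assms(1) subgroup.subset by blast
  have "carrier G \<subseteq> m_inv G ` R <#> K"
  proof
    fix g assume g: "g \<in> carrier G"
    then have "inv g \<in> K <#> R" using R(3) by simp
    then obtain k r where kr: "k \<in> K" "r \<in> R" "inv g = k \<otimes> r"
      unfolding set_mult_def by blast
    have "r \<in> carrier G" "k \<in> carrier G" using kr R(2) K by blast+
    then have "g = inv r \<otimes> inv k"
      using g kr(3) inv_inv[OF g] inv_mult_group[of k r] by simp
    then show "g \<in> m_inv G ` R <#> K"
      using kr subgroup.m_inv_closed[OF assms(1)] by (auto simp: set_mult_def)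
  qed
  moreover have "m_inv G ` R \<subseteq> carrier G" using R(2) by auto
  moreover have "m_inv G ` R <#> K \<subseteq> carrier G" using calculation(2) K by (rule setmult_subset_G)
  ultimately show ?thesis using R(1) by (intro that) auto
qed

lemma finite_rcosets_subgroup_trans:
  assumes "subgroup H G" "finite (rcosets H)"
    and "subgroup M (G\<lparr>carrier := H\<rparr>)" "finite (rcosets\<^bsub>G\<lparr>carrier := H\<rparr>\<^esub> M)"
  shows "finite (rcosets M)"
proof -
  interpret H: group "G\<lparr>carrier := H\<rparr>" using subgroup_imp_group[OF assms(1)] .
  obtain RH where RH: "finite RH" "RH \<subseteq> carrier G" "H <#> RH = carrier G"
    using finite_rcosets_imp_transversal[OF assms(1,2)] .
  obtain RM where RM: "finite RM" "RM \<subseteq> H" "M <#> RM = H"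
    using H.finite_rcosets_imp_transversal[OF assms(3,4)] by auto
  have "M \<subseteq> carrier G" "H \<subseteq> carrier G"
    using incl_subgroup[OF assms(1,3)] assms(1) subgroup.subset by blast+
  then have "M <#> (RM <#> RH) = carrier G"
    using set_mult_assoc[of M RM RH] RM RH by auto
  moreover have "RM <#> RH \<subseteq> carrier G"
    using RM(2) RH(2) \<open>H \<subseteq> carrier G\<close> setmult_subset_G[of RM RH] by blast
  moreover have "finite (RM <#> RH)" using RM(1) RH(1) by (simp add: set_mult_def)
  ultimately show ?thesis
    using transversal_imp_finite_rcosets incl_subgroup[OF assms(1,3)] by blast
qed

lemma group_index_subgroup_le:
  assumes "H \<subseteq> carrier G" "finite (rcosets M)"
  shows "group_index (G\<lparr>carrier := H\<rparr>) M \<le> group_index G M"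
  unfolding group_index_def RCOSETS_consistent
  using assms by (intro card_mono) (auto simp: RCOSETS_def)

lemma finite_index_covered_by_set_pow:
  assumes "fin_sym_gen_set G S" "subgroup M G" "finite (rcosets M)"
  obtains n where "1 \<le> n" "set_pow G S n <#> M = carrier G"
proof -
  have S: "S \<subseteq> carrier G" "finite S" "\<one> \<in> S" "\<And>x. x \<in> S \<Longrightarrow> inv x \<in> S"
    "generate G S = carrier G"
    using assms(1) by (auto simp: fin_sym_gen_set_def)
  obtain R where R: "finite R" "R \<subseteq> carrier G" "R <#> M = carrier G"
    using finite_rcosets_imp_left_transversal[OF assms(2,3)] .
  have mono: "mono (set_pow G S)" using mono_set_pow[OF S(1,3)] .
  have "R \<subseteq> (\<Union>n. set_pow G S n)"
    using R(2) generate_subset_UN_set_pow[OF S(1,3,4)] S(5) by blast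
  then obtain n where "R \<subseteq> set_pow G S n" using finite_subset_UN_mono[OF R(1) _ mono] by blast
  then have "R \<subseteq> set_pow G S (Suc n)" using monoD[OF mono, of n "Suc n"] by auto
  then have "carrier G \<subseteq> set_pow G S (Suc n) <#> M" using R(3) mono_set_mult[of R _ M M G] by simp
  moreover have "set_pow G S (Suc n) <#> M \<subseteq> carrier G"
    using set_pow_closed[OF S(1)] subgroup.subset[OF assms(2)] by (rule setmult_subset_G)
  ultimately show ?thesis by (intro that[of "Suc n"]) auto
qed

lemma transversal_set_pow_subset_schreier:
  assumes "H \<subseteq> carrier G" "T \<subseteq> carrier G" "S \<subseteq> carrier G" "H <#> T = carrier G"
  shows "T <#> set_pow G S n \<subseteq> generate G (schreier_generators G H T S) <#> T"
    (is "_ \<subseteq> generate G ?X <#> _")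
  \<comment> \<open>Schreier rewriting: t y = h t' with t' \<in> T forces h = t y t'^-1 to be a Schreier generator.\<close>
proof (induction n)
  case 0
  have "T <#> set_pow G S 0 = {\<one>} <#> T"
    using coset_mult_one[OF assms(2)] lcos_mult_one[OF assms(2)]
    by (simp add: r_coset_eq_set_mult l_coset_eq_set_mult)
  also have "\<dots> \<subseteq> generate G ?X <#> T"
    using generate.one by (intro mono_set_mult) auto
  finally show ?case .
next
  case (Suc n)
  show ?case
  proof
    fix x assume "x \<in> T <#> set_pow G S (Suc n)"
    then obtain t y g where tyg: "t \<in> T" "y \<in> S" "g \<in> set_pow G S n" "x = t \<otimes> (y \<otimes> g)"
      by (auto simp: set_mult_def)
    have c: "t \<in> carrier G" "y \<in> carrier G" "g \<in> carrier G"
      using tyg assms(2,3) set_pow_closed[OF assms(3)] by blast+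
    then have "t \<otimes> y \<in> H <#> T" using assms(4) by simp
    then obtain h t' where ht': "h \<in> H" "t' \<in> T" "t \<otimes> y = h \<otimes> t'" unfolding set_mult_def by blast
    have t': "t' \<in> carrier G" using ht'(2) assms(2) by blast
    have "h \<in> carrier G" using ht'(1) assms(1) by blast
    then have "h = t \<otimes> y \<otimes> inv t'" using ht'(3) c t' by (simp add: inv_solve_right)
    then have "h \<in> ?X"
      using ht'(1,2) tyg(1,2) unfolding schreier_generators_def set_mult_def by blast
    have "t' \<otimes> g \<in> T <#> set_pow G S n" using ht'(2) tyg(3) by (auto simp: set_mult_def)
    then have "t' \<otimes> g \<in> generate G ?X <#> T" using Suc.IH by blast
    then obtain z t'' where z: "z \<in> generate G ?X" "t'' \<in> T" "t' \<otimes> g = z \<otimes> t''"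
      unfolding set_mult_def by blast
    have "?X \<subseteq> carrier G"
      using assms(1) by (auto simp: schreier_generators_def)
    then have zt'': "z \<in> carrier G" "t'' \<in> carrier G"
      using generate_in_carrier z(1) z(2) assms(2) by blast+
    have "x = (t \<otimes> y) \<otimes> g" using tyg(4) c by (simp add: m_assoc)
    also have "\<dots> = h \<otimes> (t' \<otimes> g)" using ht'(3) \<open>h \<in> carrier G\<close> t' c by (simp add: m_assoc)
    also have "\<dots> = (h \<otimes> z) \<otimes> t''" using z(3) \<open>h \<in> carrier G\<close> zt'' by (simp add: m_assoc)
    finally have "x = (h \<otimes> z) \<otimes> t''" .
    moreover have "h \<otimes> z \<in> generate G ?X"
      using generate.eng[OF generate.incl[OF \<open>h \<in> ?X\<close>]] z by blast
    ultimately show "x \<in> generate G ?X <#> T"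
      using \<open>t'' \<in> T\<close> unfolding set_mult_def by blast
  qed
qed

lemma generate_schreier_generators:
  assumes H: "subgroup H G" and T: "T \<subseteq> carrier G" "\<one> \<in> T" "H <#> T = carrier G"
    and S: "fin_sym_gen_set G S"
  shows "generate G (schreier_generators G H T S) = H"
proof
  let ?X = "schreier_generators G H T S"
  have S': "S \<subseteq> carrier G" "\<one> \<in> S" "\<And>x. x \<in> S \<Longrightarrow> inv x \<in> S" "generate G S = carrier G"
    using S by (auto simp: fin_sym_gen_set_def)
  have Hc: "H \<subseteq> carrier G" using subgroup.subset[OF H] .
  have XH: "?X \<subseteq> H" by (simp add: schreier_generators_def)
  then show gen_H: "generate G ?X \<subseteq> H" using H by (rule generate_subgroup_incl)
  show "H \<subseteq> generate G ?X"
  proof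
    fix h assume h: "h \<in> H"
    then obtain n where "h \<in> set_pow G S n"
      using Hc generate_subset_UN_set_pow[OF S'(1-3)] S'(4) by blast
    then have "\<one> \<otimes> h \<in> T <#> set_pow G S n" using T(2) by (auto simp: set_mult_def)
    then have "h \<in> T <#> set_pow G S n" using h Hc by auto
    then have "h \<in> generate G ?X <#> T"
      using transversal_set_pow_subset_schreier[OF Hc T(1) S'(1) T(3)] by blast
    then obtain z t where zt: "z \<in> generate G ?X" "t \<in> T" "h = z \<otimes> t"
      unfolding set_mult_def by blast
    have c: "z \<in> carrier G" "t \<in> carrier G" using zt gen_H Hc T(1) by blast+
    have "t = inv z \<otimes> h" using zt(3) c by (simp add: m_assoc[symmetric])
    then have "t \<in> H" using zt(1) gen_H h subgroup.m_closed[OF H] subgroup.m_inv_closed[OF H] by blast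
    moreover have "t = t \<otimes> \<one> \<otimes> inv \<one>" using c by simp
    ultimately have "t \<in> ?X"
      using zt(2) T(2) S'(2) unfolding schreier_generators_def set_mult_def by blast
    then show "h \<in> generate G ?X" using zt generate.eng generate.incl by metis
  qed
qed

lemma fin_sym_gen_set_schreier_generators:
  assumes H: "subgroup H G" and T: "finite T" "T \<subseteq> carrier G" "\<one> \<in> T" "H <#> T = carrier G"
    and S: "fin_sym_gen_set G S"
  shows "fin_sym_gen_set (G\<lparr>carrier := H\<rparr>) (schreier_generators G H T S)"
proof -
  let ?X = "schreier_generators G H T S"
  have S': "S \<subseteq> carrier G" "finite S" "\<one> \<in> S" "\<And>x. x \<in> S \<Longrightarrow> inv x \<in> S"
    using S by (auto simp: fin_sym_gen_set_def)
  have XH: "?X \<subseteq> H" by (simp add: schreier_generators_def)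
  have "finite ?X" using T(1) S'(2) by (simp add: schreier_generators_def set_mult_def)
  moreover have "\<one> \<in> ?X"
  proof -
    have "\<one> = \<one> \<otimes> \<one> \<otimes> inv \<one>" by simp
    then show ?thesis using T(3) S'(3) subgroup.one_closed[OF H]
      unfolding schreier_generators_def set_mult_def by blast
  qed
  moreover have "inv x \<in> ?X" if x: "x \<in> ?X" for x
  proof -
    obtain t y t' where tyt': "t \<in> T" "y \<in> S" "t' \<in> T" "x = t \<otimes> y \<otimes> inv t'" "x \<in> H"
      using x unfolding schreier_generators_def set_mult_def by blast
    have c: "t \<in> carrier G" "y \<in> carrier G" "t' \<in> carrier G" using tyt' T(2) S'(1) by blast+
    then have "inv x = t' \<otimes> inv y \<otimes> inv t" using tyt'(4) by (simp add: inv_mult_group m_assoc)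
    moreover have "inv x \<in> H" using tyt'(5) H by (rule subgroup.m_inv_closed[rotated])
    ultimately show ?thesis using tyt'(1-3) S'(4)
      unfolding schreier_generators_def set_mult_def by blast
  qed
  ultimately show ?thesis
    using XH generate_consistent[OF XH H] generate_schreier_generators[OF H T(2-4) S]
    by (auto simp: fin_sym_gen_set_def m_inv_consistent[OF H] subsetD)
qed

lemma finitely_generated_subgroup:
  assumes "finitely_generated_group G" "subgroup H G" "finite (rcosets H)"
  shows "finitely_generated_group (G\<lparr>carrier := H\<rparr>)"
proof -
  obtain S where S: "fin_sym_gen_set G S"
    using assms(1) by (auto simp: finitely_generated_group_def)
  obtain R where R: "finite R" "R \<subseteq> carrier G" "H <#> R = carrier G"
    using finite_rcosets_imp_transversal[OF assms(2,3)] .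
  have "H <#> R \<subseteq> H <#> insert \<one> R" by (intro mono_set_mult) auto
  moreover have "H <#> insert \<one> R \<subseteq> carrier G"
    using subgroup.subset[OF assms(2)] R(2) by (intro setmult_subset_G) auto
  ultimately have "H <#> insert \<one> R = carrier G" using R(3) by blast
  then have "fin_sym_gen_set (G\<lparr>carrier := H\<rparr>) (schreier_generators G H (insert \<one> R) S)"
    using R(1,2) by (intro fin_sym_gen_set_schreier_generators[OF assms(2) _ _ _ _ S]) auto
  then show ?thesis
    using subgroup_imp_group[OF assms(2)] by (auto simp: finitely_generated_group_def)
qed

lemma fin_sym_gen_set_extend_transversal:
  assumes H: "subgroup H G" and Q: "fin_sym_gen_set (G\<lparr>carrier := H\<rparr>) Q"
    and R: "finite R" "R \<subseteq> carrier G" "R <#> H = carrier G"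
  shows "fin_sym_gen_set G (Q \<union> R \<union> m_inv G ` R)"
proof -
  have QH: "Q \<subseteq> H" "finite Q" "\<one> \<in> Q" using Q by (auto simp: fin_sym_gen_set_def)
  have Hc: "H \<subseteq> carrier G" using subgroup.subset[OF H] .
  have Q_inv: "inv x \<in> Q" if "x \<in> Q" for x
    using Q that QH(1) by (auto simp: fin_sym_gen_set_def m_inv_consistent[OF H] subsetD)
  have gen_Q: "generate G Q = H"
    using Q generate_consistent[OF QH(1) H] by (simp add: fin_sym_gen_set_def)
  let ?Y = "Q \<union> R \<union> m_inv G ` R"
  have Y: "?Y \<subseteq> carrier G" using QH(1) Hc R(2) by auto
  have "carrier G \<subseteq> generate G ?Y"
  proof -
    have "carrier G = R <#> generate G Q" using R(3) gen_Q by simp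
    also have "\<dots> \<subseteq> generate G ?Y <#> generate G ?Y"
      using generate.incl[of _ ?Y G] mono_generate[of Q ?Y] by (intro mono_set_mult) auto
    also have "\<dots> \<subseteq> generate G ?Y" using generate.eng by (fastforce simp: set_mult_def)
    finally show ?thesis .
  qed
  then have "generate G ?Y = carrier G" using generate_incl[OF Y] by blast
  then show ?thesis
    using Y QH R(1,2) Q_inv by (auto simp: fin_sym_gen_set_def subsetD)
qed

lemma coset_diam_le_Suc_transversal:
  assumes "subgroup H G" "M \<subseteq> H" "set_pow G Q d <#> M = H"
    and "Q \<subseteq> Y" "R \<subseteq> Y" "Y \<subseteq> carrier G" "R <#> H = carrier G"
  shows "coset_diam G Y M \<le> Suc d"
proof (rule coset_diam_le)
  have M: "M \<subseteq> carrier G" using assms(1,2) subgroup.subset by blast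
  have "carrier G = R <#> (set_pow G Q d <#> M)" using assms(3,7) by simp
  also have "\<dots> \<subseteq> Y <#> (set_pow G Y d <#> M)"
    using assms(4,5) set_pow_mono[of Q Y G d] by (intro mono_set_mult) auto
  also have "\<dots> = set_pow G Y (Suc d) <#> M"
    using set_mult_assoc[OF assms(6) set_pow_closed[OF assms(6)] M] by simp
  finally have "carrier G \<subseteq> set_pow G Y (Suc d) <#> M" .
  moreover have "set_pow G Y (Suc d) <#> M \<subseteq> carrier G"
    using set_pow_closed[OF assms(6)] M by (rule setmult_subset_G)
  ultimately show "set_pow G Y (Suc d) <#> M = carrier G" by blast
qed simp

lemma unif_almost_flat_subgroup_bound:
  assumes flat: "unif_almost_flat G \<alpha>" and "0 \<le> \<alpha>"
    and H: "subgroup H G" "finite (rcosets H)" and Q: "fin_sym_gen_set (G\<lparr>carrier := H\<rparr>) Q"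
  shows "\<exists>\<epsilon>>0. \<forall>M. finite_index_subgroup M (G\<lparr>carrier := H\<rparr>) \<longrightarrow>
           \<epsilon> * real (group_index (G\<lparr>carrier := H\<rparr>) M) powr \<alpha> \<le> real (coset_diam (G\<lparr>carrier := H\<rparr>) Q M)"
proof -
  interpret H: group "G\<lparr>carrier := H\<rparr>" using subgroup_imp_group[OF H(1)] .
  obtain R where R: "finite R" "R \<subseteq> carrier G" "R <#> H = carrier G"
    using finite_rcosets_imp_left_transversal[OF H] .
  define Y where "Y = Q \<union> R \<union> m_inv G ` R"
  have Y: "fin_sym_gen_set G Y"
    unfolding Y_def using fin_sym_gen_set_extend_transversal[OF H(1) Q R] .
  then obtain \<epsilon> where \<epsilon>: "\<epsilon> > 0" "\<And>M. finite_index_subgroup M G \<Longrightarrow>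
      \<epsilon> * real (group_index G M) powr \<alpha> \<le> real (coset_diam G Y M)"
    using flat by (auto simp: unif_almost_flat_def)
  have "\<epsilon> / 2 * real (group_index (G\<lparr>carrier := H\<rparr>) M) powr \<alpha> \<le> real (coset_diam (G\<lparr>carrier := H\<rparr>) Q M)"
    if M: "finite_index_subgroup M (G\<lparr>carrier := H\<rparr>)" for M
  proof -
    have M_sub: "subgroup M (G\<lparr>carrier := H\<rparr>)" and M_fin: "finite (rcosets\<^bsub>G\<lparr>carrier := H\<rparr>\<^esub> M)"
      using M by (auto simp: finite_index_subgroup_def)
    have M_G: "finite_index_subgroup M G"
      using incl_subgroup[OF H(1) M_sub] finite_rcosets_subgroup_trans[OF H M_sub M_fin]
      by (simp add: finite_index_subgroup_def)
    define d where "d = coset_diam (G\<lparr>carrier := H\<rparr>) Q M"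
    obtain n where "1 \<le> n"
      "set_pow (G\<lparr>carrier := H\<rparr>) Q n <#>\<^bsub>G\<lparr>carrier := H\<rparr>\<^esub> M = carrier (G\<lparr>carrier := H\<rparr>)"
      using H.finite_index_covered_by_set_pow[OF Q M_sub M_fin] .
    from coset_diam_covers[OF this] have d: "1 \<le> d" "set_pow G Q d <#> M = H"
      by (simp_all add: d_def)
    have "\<epsilon> * real (group_index (G\<lparr>carrier := H\<rparr>) M) powr \<alpha> \<le> \<epsilon> * real (group_index G M) powr \<alpha>"
      using group_index_subgroup_le[of H M] subgroup.subset[OF H(1)] M_G \<epsilon>(1) \<open>0 \<le> \<alpha>\<close>
      by (auto simp: finite_index_subgroup_def intro!: mult_left_mono powr_mono2)
    also have "\<dots> \<le> real (coset_diam G Y M)" using \<epsilon>(2)[OF M_G] .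
    also have "coset_diam G Y M \<le> Suc d"
      using subgroup.subset[OF M_sub] Y
      by (intro coset_diam_le_Suc_transversal[OF H(1) _ d(2) _ _ _ R(3)])
         (auto simp: Y_def fin_sym_gen_set_def)
    also have "\<dots> \<le> 2 * d" using d(1) by simp
    finally show ?thesis by (simp add: d_def)
  qed
  then show ?thesis using \<epsilon>(1) by (intro exI[of _ "\<epsilon> / 2"]) auto
qed

end

theorem lemma2p5:
  fixes G :: "('a, 'b) monoid_scheme" and H :: "'a set" and \<alpha> :: real
  assumes "group G"
    and "finitely_generated_group G"
    and "0 < \<alpha>" and "\<alpha> \<le> 1"
    and "unif_almost_flat G \<alpha>"
    and "finite_index_subgroup H G"
  shows "unif_almost_flat (G\<lparr>carrier := H\<rparr>) \<alpha>"
proof -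
  interpret group G by fact
  have H: "subgroup H G" "finite (rcosets\<^bsub>G\<^esub> H)"
    using assms(6) by (auto simp: finite_index_subgroup_def)
  show ?thesis
    unfolding unif_almost_flat_def
    using finitely_generated_subgroup[OF assms(2) H] unif_almost_flat_subgroup_bound[OF assms(5) _ H]
      assms(3) by auto
qed

end
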